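(* Suppose $\xi$ is an $\mathcal{S}$-shrinking point of the map $f$, where $\mathcal{S}=\mathcal{F}[\ell,m,n]$. If $\sigma<1$, then $c>0$.
   Context: Fix $N\ge2$. For $\mu\in\mathbb{R}$ and a parameter $\xi$, $f(x)=A_Lx+B\mu$ if $e_1^{\mathsf T}x\le0$, $f(x)=A_Rx+B\mu$ if $e_1^{\mathsf T}x\ge0$, with $A_L,A_R$ real $N\times N$, $B\in\mathbb{R}^N$ and $A_R=A_L+Ce_1^{\mathsf T}$ for some $C$. $f^L(x)=A_Lx+B\mu$, $f^R(x)=A_Rx+B\mu$, $\varrho^{\mathsf T}=e_1^{\mathsf T}\mathrm{adj}(I-A_L)$. A periodic $\mathcal{S}:\mathbb{Z}\to\{L,R\}$ of period $n$ is identified with $\mathcal{S}_0\cdots\mathcal{S}_{n-1}$; indices mod $n$; $\mathcal{S}^{\overline j}$ differs from $\mathcal{S}$ exactly at indices $\equiv j$; $M_{\mathcal{S}}=A_{\mathcal{S}_{n-1}}\cdots A_{\mathcal{S}_0}$. An $\mathcal{S}$-cycle is $(x_0,\dots,x_{n-1})$ with $x_{(i+1)\bmod n}=f^{\mathcal{S}_i}(x_i)$; admissible if $e_1^{\mathsf T}x_i\le0$ whenever $\mathcal{S}_i=L$ and $\ge0$ whenever $\mathcal{S}_i=R$. $\mathcal{F}[\ell,m,n]_i=L$ if $im\bmod n<\ell$ and $R$ otherwise ($\ell<n$, $m<n$ positive, $\gcd(m,n)=1$); $d$ is the inverse of $m$ mod $n$. Shrinking point: with $\mu\ne0$, $\varrho^{\mathsf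 T}B\ne0$, $2\le\ell\le n-2$, $\xi$ is an $\mathcal{S}$-shrinking point if $\det(I-M_{\mathcal{S}^{\overline0}})\ne0$, $\det(I-M_{\mathcal{S}^{\overline{\ell d}}})\ne0$, the (unique) $\mathcal{S}^{\overline0}$-cycle is admissible and its first coordinates vanish exactly at indices $\equiv0$ and $\equiv\ell d$. At a shrinking point $M_{\mathcal{S}}$ has eigenvalue $1$ with algebraic multiplicity one; writing the eigenvalues of $M_{\mathcal{S}}$ (with multiplicity) as $\rho_1=1,\rho_2,\dots,\rho_N$, one sets $\sigma=\max_{2\le i\le N}|\rho_i|$ and $c=\prod_{i=2}^N(1-\rho_i)$ (the product of the nonzero eigenvalues of $I-M_{\mathcal{S}}$). *)

theory Defs
  imports "Jordan_Normal_Form.Char_Poly" "HOL-Computational_Algebra.Polynomial"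
begin

datatype side = L | R

definition opp_side :: "side \<Rightarrow> side" where
  "opp_side s = (case s of L \<Rightarrow> R | R \<Rightarrow> L)"

text \<open>Symbolic sequences: functions nat => side, only their values mod n matter
  (indices are always reduced mod the period n).\<close>

definition Fword :: "nat \<Rightarrow> nat \<Rightarrow> nat \<Rightarrow> nat \<Rightarrow> side" where
  "Fword l m n i = (if (i * m) mod n < l then L else R)"

definition flip_at :: "nat \<Rightarrow> (nat \<Rightarrow> side) \<Rightarrow> nat \<Rightarrow> nat \<Rightarrow> side" where
  "flip_at n S j i = (if i mod n = j mod n then opp_side (S i) else S i)"

definition Amat :: "real mat \<Rightarrow> real mat \<Rightarrow> side \<Rightarrow> real mat" where
  "Amat AL AR s = (case s of L \<Rightarrow> AL | R \<Rightarrow> AR)"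

fun Mprod :: "real mat \<Rightarrow> real mat \<Rightarrow> (nat \<Rightarrow> side) \<Rightarrow> nat \<Rightarrow> real mat" where
  "Mprod AL AR S 0 = 1\<^sub>m (dim_row AL)"
| "Mprod AL AR S (Suc k) = Amat AL AR (S k) * Mprod AL AR S k"

definition AR_of :: "nat \<Rightarrow> real mat \<Rightarrow> real vec \<Rightarrow> real mat" where
  "AR_of N AL C = AL + mat N N (\<lambda>(i,j). if j = 0 then C $ i else 0)"

definition rho_vec :: "nat \<Rightarrow> real mat \<Rightarrow> real vec" where
  "rho_vec N AL = row (adj_mat (1\<^sub>m N - AL)) 0"

definition is_cycle :: "nat \<Rightarrow> real mat \<Rightarrow> real mat \<Rightarrow> real vec \<Rightarrow> real \<Rightarrow> (nat \<Rightarrow> side) \<Rightarrow> nat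
    \<Rightarrow> (nat \<Rightarrow> real vec) \<Rightarrow> bool" where
  "is_cycle N AL AR B mu S n xs =
     (\<forall>i<n. xs i \<in> carrier_vec N \<and>
        xs (Suc i mod n) = Amat AL AR (S i) *\<^sub>v xs i + mu \<cdot>\<^sub>v B)"

definition admissible :: "(nat \<Rightarrow> side) \<Rightarrow> nat \<Rightarrow> (nat \<Rightarrow> real vec) \<Rightarrow> bool" where
  "admissible S n xs =
     (\<forall>i<n. (S i = L \<longrightarrow> xs i $ 0 \<le> 0) \<and> (S i = R \<longrightarrow> xs i $ 0 \<ge> 0))"

text \<open>xi = (A_L, C, B, mu) is an S-shrinking point (S of period n, parameters l, d).\<close>
definition shrinking_point :: "nat \<Rightarrow> real mat \<Rightarrow> real vec \<Rightarrow> real vec \<Rightarrow> real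
    \<Rightarrow> (nat \<Rightarrow> side) \<Rightarrow> nat \<Rightarrow> nat \<Rightarrow> nat \<Rightarrow> bool" where
  "shrinking_point N AL C B mu S l n d =
     (let AR = AR_of N AL C in
       mu \<noteq> 0 \<and> rho_vec N AL \<bullet> B \<noteq> 0 \<and> 2 \<le> l \<and> l + 2 \<le> n \<and>
       det (1\<^sub>m N - Mprod AL AR (flip_at n S 0) n) \<noteq> 0 \<and>
       det (1\<^sub>m N - Mprod AL AR (flip_at n S (l * d)) n) \<noteq> 0 \<and>
       (\<exists>xs. is_cycle N AL AR B mu (flip_at n S 0) n xs \<and>
             admissible (flip_at n S 0) n xs \<and>
             (\<forall>i<n. xs i $ 0 = 0 \<longleftrightarrow> (i = 0 \<or> i = (l * d) mod n))))"

definition other_eigs :: "real mat \<Rightarrow> complex multiset" where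
  "other_eigs M = proots (char_poly (map_mat complex_of_real M)) - {#1#}"

definition sigma_of :: "real mat \<Rightarrow> real" where
  "sigma_of M = Max (cmod ` set_mset (other_eigs M))"

definition c_of :: "real mat \<Rightarrow> complex" where
  "c_of M = prod_mset (image_mset (\<lambda>r. 1 - r) (other_eigs M))"

end

theory Submission
  imports Defs
begin

text \<open>The monodromy matrix is real, so its characteristic polynomial has real coefficients and
  its roots other than (one copy of) 1 come in complex conjugate pairs of equal multiplicity.
  Each real root \<open>\<rho>\<close> with \<open>|\<rho>| < 1\<close> contributes a factor \<open>1 - \<rho> > 0\<close> to \<open>c\<close>, and each non-real
  pair contributes \<open>(1 - \<rho>)(1 - \<rho>\<^sup>*) = |1 - \<rho>|\<^sup>2 > 0\<close>.\<close>

definition cnj_symmetric :: "complex multiset \<Rightarrow> bool" where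
  "cnj_symmetric X \<longleftrightarrow> (\<forall>x. count X (cnj x) = count X x)"

lemma cnj_symmetric_diff:
  assumes "cnj_symmetric X" and "cnj_symmetric Y"
  shows "cnj_symmetric (X - Y)"
  using assms by (simp add: cnj_symmetric_def)

lemma cnj_symmetric_singleton:
  assumes "cnj x = x"
  shows "cnj_symmetric {#x#}"
  unfolding cnj_symmetric_def using assms by (metis complex_cnj_cnj count_single)

lemma cnj_symmetric_conjugate_pair: "cnj_symmetric {#x, cnj x#}"
  unfolding cnj_symmetric_def by (auto simp: complex_cnj_cnj)

lemma conjugate_pair_subset:
  assumes "cnj_symmetric X" and "x \<in># X" and "cnj x \<noteq> x"
  shows "{#x, cnj x#} \<subseteq># X"
proof -
  have "cnj x \<in># X"
    using assms(1,2) by (metis cnj_symmetric_def count_eq_zero_iff)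
  then show ?thesis
    using assms(2,3) by (simp add: insert_subset_eq_iff in_diff_count)
qed

lemma order_cnj_le:
  fixes p :: "complex poly"
  assumes real: "map_poly cnj p = p" and "p \<noteq> 0"
  shows "order x p \<le> order (cnj x) p"
proof -
  interpret cnj_hom: map_poly_comm_ring_hom cnj
    by unfold_locales auto
  have "[:-x, 1:] ^ order x p dvd p" by (simp add: order_divides)
  then have "map_poly cnj ([:-x, 1:] ^ order x p) dvd map_poly cnj p"
    by (rule cnj_hom.hom_dvd)
  then have "[:-cnj x, 1:] ^ order x p dvd p"
    using real by (simp add: cnj_hom.hom_power)
  then show ?thesis using \<open>p \<noteq> 0\<close> by (simp add: order_divides)
qed

lemma cnj_symmetric_proots:
  fixes p :: "complex poly"
  assumes "map_poly cnj p = p"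
  shows "cnj_symmetric (proots p)"
proof (cases "p = 0")
  case False
  have "order (cnj x) p = order x p" for x
    using order_cnj_le[OF assms False, of x] order_cnj_le[OF assms False, of "cnj x"] by simp
  then show ?thesis using False by (simp add: cnj_symmetric_def)
qed (simp add: cnj_symmetric_def)

lemma prod_one_minus_positive_real:
  assumes "cnj_symmetric X" and "\<forall>x\<in>#X. cmod x < 1"
  shows "\<exists>a>0. (\<Prod>r\<in>#X. 1 - r) = complex_of_real a"
  using assms
proof (induction "size X" arbitrary: X rule: less_induct)
  case less
  show ?case
  proof (cases "X = {#}")
    case False
    then obtain x where x: "x \<in># X" by blast
    have "x \<noteq> 1" using less.prems(2) x by auto
    define Y where "Y = (if cnj x = x then {#x#} else {#x, cnj x#})"
    have "Y \<subseteq># X" and "cnj_symmetric Y"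
      using x conjugate_pair_subset[OF less.prems(1) x] cnj_symmetric_singleton
        cnj_symmetric_conjugate_pair
      by (auto simp: Y_def)
    have X_split: "X = Y + (X - Y)" using \<open>Y \<subseteq># X\<close> by simp
    obtain a where "a > 0" and a: "(\<Prod>r\<in>#X - Y. 1 - r) = complex_of_real a"
    proof -
      have "Y \<noteq> {#}" by (simp add: Y_def)
      then have "size (X - Y) < size X"
        using \<open>Y \<subseteq># X\<close>
        by (metis diff_less nonempty_has_size size_Diff_submset subset_mset.le_zero_eq)
      then show ?thesis
        using less.hyps[of "X - Y"] cnj_symmetric_diff[OF less.prems(1) \<open>cnj_symmetric Y\<close>]
          less.prems(2) that by (meson in_diffD)
    qed
    obtain b where "b > 0" and b: "(\<Prod>r\<in>#Y. 1 - r) = complex_of_real b"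
    proof (cases "cnj x = x")
      case True
      then have "x \<in> \<real>" by (simp add: Reals_cnj_iff)
      then have "1 - x = complex_of_real (1 - Re x)"
        by (metis Re_complex_of_real Reals_cases of_real_1 of_real_diff)
      moreover have "Re x < 1"
        using complex_Re_le_cmod[of x] less.prems(2) x by fastforce
      ultimately show ?thesis
        by (intro that[of "1 - Re x"]) (simp_all add: Y_def True)
    next
      case False
      have "(1 - x) * (1 - cnj x) = complex_of_real ((cmod (1 - x))\<^sup>2)"
        using complex_norm_square[of "1 - x"] by simp
      moreover have "(cmod (1 - x))\<^sup>2 > 0" using \<open>x \<noteq> 1\<close> by simp
      ultimately show ?thesis
        by (intro that[of "(cmod (1 - x))\<^sup>2"]) (simp_all add: Y_def False)
    qed
    have "(\<Prod>r\<in>#X. 1 - r) = complex_of_real (b * a)"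
      by (subst X_split) (simp add: a b)
    then show ?thesis using \<open>a > 0\<close> \<open>b > 0\<close> mult_pos_pos by blast
  qed simp
qed

lemma c_of_positive:
  assumes M: "M \<in> carrier_mat N N" and "sigma_of M < 1"
  shows "c_of M \<in> \<real> \<and> Re (c_of M) > 0"
proof -
  have char_poly_real:
    "char_poly (map_mat complex_of_real M) = map_poly complex_of_real (char_poly M)"
    by (rule of_real_hom.char_poly_hom[OF M])
  have "cnj_symmetric (proots (char_poly (map_mat complex_of_real M)))"
    unfolding char_poly_real
    by (intro cnj_symmetric_proots poly_eqI) (simp add: coeff_map_poly)
  then have "cnj_symmetric (other_eigs M)"
    unfolding other_eigs_def
    by (intro cnj_symmetric_diff cnj_symmetric_singleton) simp_all
  moreover have "\<forall>x\<in>#other_eigs M. cmod x < 1"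
    using \<open>sigma_of M < 1\<close> unfolding sigma_of_def
    by (metis (no_types) Max_ge finite_imageI finite_set_mset image_eqI order.strict_trans1)
  ultimately obtain a where "a > 0" "c_of M = complex_of_real a"
    using prod_one_minus_positive_real unfolding c_of_def by blast
  then show ?thesis by simp
qed

lemma Mprod_carrier:
  assumes "AL \<in> carrier_mat N N" and "AR \<in> carrier_mat N N"
  shows "Mprod AL AR S k \<in> carrier_mat N N"
proof (induction k)
  case (Suc k)
  have "Amat AL AR (S k) \<in> carrier_mat N N"
    using assms by (cases "S k") (auto simp: Amat_def)
  then show ?case using Suc by simp
qed (use assms in simp)

theorem lemma6p4:
  fixes N l m n d :: nat and AL :: "real mat" and B C :: "real vec" and mu :: real
  assumes "N \<ge> 2"
    and "AL \<in> carrier_mat N N" and "B \<in> carrier_vec N" and "C \<in> carrier_vec N"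
    and "0 < l" and "l < n" and "0 < m" and "m < n" and "coprime m n"
    and "d < n" and "(m * d) mod n = 1"
    and "shrinking_point N AL C B mu (Fword l m n) l n d"
    and "sigma_of (Mprod AL (AR_of N AL C) (Fword l m n) n) < 1"
  shows "c_of (Mprod AL (AR_of N AL C) (Fword l m n) n) \<in> \<real> \<and>
         Re (c_of (Mprod AL (AR_of N AL C) (Fword l m n) n)) > 0"
proof -
  have "AR_of N AL C \<in> carrier_mat N N"
    using assms(2) unfolding AR_of_def by simp
  then have "Mprod AL (AR_of N AL C) (Fword l m n) n \<in> carrier_mat N N"
    using Mprod_carrier assms(2) by blast
  then show ?thesis using c_of_positive assms(13) by blast
qed

end
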